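(* Let $\omega\in N\check C^n(X\times E)$ be a non-flat differential $n$-cochain on a product cover and $\eta=\check d\omega$. For multi-indices $(a)=(a_1,\dots,a_r)$ and $(b)=(b_1,\dots,b_k)$, $$T^{(a)}_{(b)}\eta=(-1)^{|(a)|+|(b)|+1}\,d\,T^{(a)}_{(b)}\omega+(-1)^{|(b)|+1}[\delta_aT^{(\cdot)}_{(b)}\omega]^{(a)}+[\delta_bT^{(a)}_{(\cdot)}\omega]_{(b)},$$ where the second term is absent if $|(a)|=1$ and the third term is absent if $|(b)|=1$.
   Context: $X,E$ are closed smooth manifolds with open covers $(U_a)_{a\in\mathcal A}$ and $(U_b)_{b\in\mathcal B}$; the product cover of $X\times E$ consists of $U_{(ab)}=U_a\times U_b$. A non-flat differential $n$-cochain on it is $(H,\omega^n_{(a_1b_1)},\omega^{n-1}_{(a_1b_1)(a_2b_2)},\dots,\omega^{-1}_{(a_1b_1)\dots(a_{n+2}b_{n+2})})$, $H$ a global $(n+1)$-form, $\omega^s$ local $s$-forms ($s\ge0$) on intersections of $n+1-s$ product sets, $\omega^{-1}$ locally constant $2\pi\mathbb Z$-valued; components with repeated index vanish. $\check d=\delta+(-1)^{r+1}d$ on Čech degree $r$ (with $\delta$ the Čech coboundary, $d$ exterior derivative), the top component of $\check d(H,\omega)$ being $H|-d\omega^n$. For $(a)=(a_1..a_r)$, $(b)=(b_1..b_k)$, define the local $(n+2-r-k)$-form $T^{(a)}_{(b)}\omega=\sum_{\gamma\in\mathcal D}(-1)^{A(\gamma)}\omega^{n+2-k-r}_\gamma$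 on $(U_{a_1}\cap\dots\cap U_{a_r})\times(U_{b_1}\cap\dots\cap U_{b_k})$, where $\mathcal D$ is the set of lattice paths $\gamma=((a_{p_1}b_{q_1}),\dots,(a_{p_{r+k-1}}b_{q_{r+k-1}}))$ in the grid $\{(a_pb_q)\}$ from $(a_1b_1)$ to $(a_rb_k)$ moving only right or upward, $A(\gamma)$ is the area between $\gamma$ and the $b$-axis, and $\omega_\gamma=\omega_{(a_{p_1}b_{q_1})\dots(a_{p_{r+k-1}}b_{q_{r+k-1}})}$. $\delta_a$ (resp. $\delta_b$) denotes the Čech coboundary in the first (resp. second) multi-index, e.g. $[\delta_bT^{(a)}_{(\cdot)}\omega]_{(b)}=\sum_{j}(-1)^{j+1}T^{(a)}_{(b_1..\hat b_j..b_k)}\omega$. *)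

theory Defs
  imports "HOL-Analysis.Analysis"
begin

text \<open>Local differential forms are elements of a real vector space 'f;
  the exterior derivative is a linear map d on 'f; restrictions to smaller intersections are
  left implicit (identified). A cochain on the product cover is a function
  w :: ('a \<times> 'b) list \<Rightarrow> 'f, where w [] = H is the global form and w applied to a list of
  m \<ge> 1 product indices is the local (n+1-m)-form on the corresponding intersection.\<close>

definition del_nth :: "nat \<Rightarrow> 'x list \<Rightarrow> 'x list" where
  "del_nth j xs = take j xs @ drop (Suc j) xs"

definition diff_cochain :: "nat \<Rightarrow> ('f::real_vector \<Rightarrow> 'f) \<Rightarrow> (('a \<times> 'b) list \<Rightarrow> 'f) \<Rightarrow> bool" where
  "diff_cochain n d w \<longleftrightarrow>
     (\<forall>t. length t > n + 2 \<longrightarrow> w t = 0) \<and>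
     (\<forall>t. t \<noteq> [] \<and> \<not> distinct t \<longrightarrow> w t = 0) \<and>
     (\<forall>t. length t = n + 2 \<longrightarrow> d (w t) = 0)"

text \<open>The total differential: on Cech degree r (lists of length r+1) it is
  delta + (-1)^(r+1) d; the top component is H| - d w^n. On the global component, dH.\<close>
definition check_d :: "('f::real_vector \<Rightarrow> 'f) \<Rightarrow> ('i list \<Rightarrow> 'f) \<Rightarrow> 'i list \<Rightarrow> 'f" where
  "check_d d w t =
     (if t = [] then d (w [])
      else (\<Sum>j<length t. ((-1::real) ^ j) *\<^sub>R w (del_nth j t))
           + ((-1::real) ^ length t) *\<^sub>R d (w t))"

text \<open>Lattice paths in the grid {(p,q). p < r, q < k} (0-based positions of (a_p b_q))
  from (0,0) to (r-1,k-1), moving right (p+1) or upward (q+1).\<close>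
definition lattice_paths :: "nat \<Rightarrow> nat \<Rightarrow> (nat \<times> nat) list set" where
  "lattice_paths r k = {\<gamma>. \<gamma> \<noteq> [] \<and> hd \<gamma> = (0, 0) \<and> last \<gamma> = (r - 1, k - 1) \<and>
     (\<forall>i < length \<gamma> - 1. \<gamma> ! Suc i = (Suc (fst (\<gamma> ! i)), snd (\<gamma> ! i))
                        \<or> \<gamma> ! Suc i = (fst (\<gamma> ! i), Suc (snd (\<gamma> ! i))))}"

text \<open>Area between the path and the b-axis (the line of grid points (a_1 b_q)):
  each b-step taken at a-position p (0-based) contributes p unit squares.\<close>
definition path_area :: "(nat \<times> nat) list \<Rightarrow> nat" where
  "path_area \<gamma> = (\<Sum>i < length \<gamma> - 1.
      if \<gamma> ! Suc i = (fst (\<gamma> ! i), Suc (snd (\<gamma> ! i))) then fst (\<gamma> ! i) else 0)"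

definition T_op :: "'a list \<Rightarrow> 'b list \<Rightarrow> (('a \<times> 'b) list \<Rightarrow> 'f::real_vector) \<Rightarrow> 'f" where
  "T_op as bs w = (\<Sum>\<gamma>\<in>lattice_paths (length as) (length bs).
      ((-1::real) ^ path_area \<gamma>) *\<^sub>R w (map (\<lambda>(p, q). (as ! p, bs ! q)) \<gamma>))"

definition delta_a_T :: "'a list \<Rightarrow> 'b list \<Rightarrow> (('a \<times> 'b) list \<Rightarrow> 'f::real_vector) \<Rightarrow> 'f" where
  "delta_a_T as bs w = (\<Sum>j<length as. ((-1::real) ^ j) *\<^sub>R T_op (del_nth j as) bs w)"

definition delta_b_T :: "'a list \<Rightarrow> 'b list \<Rightarrow> (('a \<times> 'b) list \<Rightarrow> 'f::real_vector) \<Rightarrow> 'f" where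
  "delta_b_T as bs w = (\<Sum>j<length bs. ((-1::real) ^ j) *\<^sub>R T_op as (del_nth j bs) w)"

end

theory Submission
  imports Defs
begin

text \<open>Split the lattice paths of the grid \<open>(a) \<times> (b)\<close> by their first step. A path starting
  with an a-step is a shifted path of the grid without \<open>a\<^sub>1\<close>, and its area grows by \<open>|(b)| - 1\<close>;
  a path starting with a b-step is a shifted path of the grid without \<open>b\<^sub>1\<close>, of the same area.
  Hence \<open>T\<close> satisfies a recursion in the contraction \<open>\<omega>'\<close> of \<open>\<omega>\<close> with the corner index
  \<open>(a\<^sub>1 b\<^sub>1)\<close>. Contraction is a contracting homotopy of the total differential:
  \<open>(check_d \<omega>)' = \<omega> - check_d \<omega>'\<close>. The Cech sums over \<open>(a)\<close> and \<open>(b)\<close> obey the same recursion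
  up to boundary terms, so the formula follows by induction on \<open>|(a)| + |(b)|\<close>. The induction runs
  over all index lists, which forces a correction term \<open>H\<close> in the excluded case \<open>|(a)| = |(b)| = 1\<close>.\<close>

definition lattice_step :: "nat \<times> nat \<Rightarrow> nat \<times> nat \<Rightarrow> bool" where
  "lattice_step z z' \<longleftrightarrow> z' = (Suc (fst z), snd z) \<or> z' = (fst z, Suc (snd z))"

lemma lattice_paths_conv_successively:
  "lattice_paths r k =
     {\<gamma>. \<gamma> \<noteq> [] \<and> hd \<gamma> = (0, 0) \<and> last \<gamma> = (r - 1, k - 1) \<and> successively lattice_step \<gamma>}"
  unfolding lattice_paths_def successively_conv_nth lattice_step_def
  by (auto simp: less_diff_conv)

lemma lattice_paths_pred: "lattice_paths r k = lattice_paths (Suc (r - 1)) (Suc (k - 1))"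
  by (simp add: lattice_paths_def)

lemma lattice_step_le: "lattice_step z z' \<Longrightarrow> z \<le> z'"
  by (auto simp: lattice_step_def less_eq_prod_def)

lemma successively_lattice_step_sorted:
  "successively lattice_step \<gamma> \<Longrightarrow> sorted_wrt (\<le>) \<gamma>"
  by (metis lattice_step_le successively_conv_sorted_wrt successively_mono transp_on_le)

lemma successively_lattice_step_apfst_Suc [simp]:
  "successively lattice_step (map (apfst Suc) \<gamma>) \<longleftrightarrow> successively lattice_step \<gamma>"
  by (simp add: successively_map lattice_step_def prod_eq_iff)

lemma successively_lattice_step_apsnd_Suc [simp]:
  "successively lattice_step (map (apsnd Suc) \<gamma>) \<longleftrightarrow> successively lattice_step \<gamma>"
  by (simp add: successively_map lattice_step_def prod_eq_iff)

lemma path_area_single [simp]: "path_area [z] = 0"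
  by (simp add: path_area_def)

lemma path_area_Cons_Cons [simp]:
  "path_area (z # z' # \<gamma>) = (if z' = (fst z, Suc (snd z)) then fst z else 0) + path_area (z' # \<gamma>)"
proof -
  have len: "length (z # z' # \<gamma>) - 1 = Suc (length (z' # \<gamma>) - 1)" by simp
  show ?thesis
    unfolding path_area_def len sum.lessThan_Suc_shift by (simp only: nth_Cons_Suc nth_Cons_0)
qed

lemma path_area_apfst_Suc:
  "successively lattice_step \<gamma> \<Longrightarrow> \<gamma> \<noteq> [] \<Longrightarrow>
     path_area (map (apfst Suc) \<gamma>) + snd (hd \<gamma>) = path_area \<gamma> + snd (last \<gamma>)"
  by (induction \<gamma> rule: induct_list012) (auto simp: lattice_step_def prod_eq_iff)

lemma path_area_apsnd_Suc: "path_area (map (apsnd Suc) \<gamma>) = path_area \<gamma>"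
  by (induction \<gamma> rule: induct_list012) (auto simp: prod_eq_iff)

definition cons_a_step :: "(nat \<times> nat) list \<Rightarrow> (nat \<times> nat) list" where
  "cons_a_step \<gamma> = (0, 0) # map (apfst Suc) \<gamma>"

definition cons_b_step :: "(nat \<times> nat) list \<Rightarrow> (nat \<times> nat) list" where
  "cons_b_step \<gamma> = (0, 0) # map (apsnd Suc) \<gamma>"

lemma lattice_paths_Suc_Suc:
  "lattice_paths (Suc r) (Suc k) =
     (if r = 0 \<and> k = 0 then {[(0, 0)]} else {})
   \<union> (if 0 < r then cons_a_step ` lattice_paths r (Suc k) else {})
   \<union> (if 0 < k then cons_b_step ` lattice_paths (Suc r) k else {})"
  (is "?L = ?R")
proof
  show "?L \<subseteq> ?R"
  proof
    fix \<gamma> assume "\<gamma> \<in> ?L"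
    then obtain t where \<gamma>: "\<gamma> = (0, 0) # t" and walk: "successively lattice_step ((0, 0) # t)"
      and last: "last ((0, 0) # t) = (r, k)"
      unfolding lattice_paths_conv_successively by (cases \<gamma>) auto
    have above_hd: "hd t \<le> z" if "z \<in> set t" for z
      using that successively_lattice_step_sorted[of t] walk by (cases t) auto
    consider "t = []" | "t \<noteq> []" "hd t = (1, 0)" | "t \<noteq> []" "hd t = (0, 1)"
      using walk by (auto simp: successively_Cons lattice_step_def)
    then show "\<gamma> \<in> ?R"
    proof cases
      case 1
      then show ?thesis using \<gamma> last by simp
    next
      case 2
      define \<gamma>' where "\<gamma>' = map (apfst (\<lambda>p. p - 1)) t"
      have t: "t = map (apfst Suc) \<gamma>'"
        unfolding \<gamma>'_def map_map using above_hd 2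
        by (force intro!: map_idI[symmetric] simp: less_eq_prod_def)
      have "\<gamma>' \<in> lattice_paths r (Suc k)" and "0 < r"
        using walk last 2 above_hd[of "last t"]
        by (auto simp: lattice_paths_conv_successively t hd_map last_map successively_Cons
            less_eq_prod_def prod_eq_iff)
      then show ?thesis using \<gamma> t by (auto simp: cons_a_step_def)
    next
      case 3
      define \<gamma>' where "\<gamma>' = map (apsnd (\<lambda>q. q - 1)) t"
      have t: "t = map (apsnd Suc) \<gamma>'"
        unfolding \<gamma>'_def map_map using above_hd 3
        by (force intro!: map_idI[symmetric] simp: less_eq_prod_def)
      have "\<gamma>' \<in> lattice_paths (Suc r) k" and "0 < k"
        using walk last 3 above_hd[of "last t"]
        by (auto simp: lattice_paths_conv_successively t hd_map last_map successively_Cons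
            less_eq_prod_def prod_eq_iff)
      then show ?thesis using \<gamma> t by (auto simp: cons_b_step_def)
    qed
  qed
  show "?R \<subseteq> ?L"
    by (auto simp: lattice_paths_conv_successively cons_a_step_def cons_b_step_def
        successively_Cons hd_map last_map split: if_splits) (simp_all add: lattice_step_def)
qed

lemma finite_lattice_paths: "finite (lattice_paths r k)"
proof -
  have "finite (lattice_paths (Suc r) (Suc k))" for r k
  proof (induction "r + k" arbitrary: r k rule: less_induct)
    case less
    then show ?case
      unfolding lattice_paths_Suc_Suc using less[of "r - 1" k] less[of r "k - 1"] by auto
  qed
  then show ?thesis by (subst lattice_paths_pred)
qed

lemma inj_cons_a_step: "inj cons_a_step"
  and inj_cons_b_step: "inj cons_b_step"
  by (auto intro!: injI simp: cons_a_step_def cons_b_step_def inj_map_eq_map)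

lemma cons_a_step_neq_cons_b_step:
  "\<gamma> \<noteq> [] \<Longrightarrow> hd \<gamma> = (0, 0) \<Longrightarrow> \<gamma>' \<noteq> [] \<Longrightarrow> hd \<gamma>' = (0, 0) \<Longrightarrow>
     cons_a_step \<gamma> \<noteq> cons_b_step \<gamma>'"
  by (cases \<gamma>; cases \<gamma>') (auto simp: cons_a_step_def cons_b_step_def)

lemma path_area_cons_a_step:
  assumes "\<gamma> \<in> lattice_paths r (Suc k)"
  shows "path_area (cons_a_step \<gamma>) = k + path_area \<gamma>"
proof -
  have walk: "successively lattice_step \<gamma>" and "\<gamma> \<noteq> []" "hd \<gamma> = (0, 0)" "snd (last \<gamma>) = k"
    using assms by (auto simp: lattice_paths_conv_successively)
  then have "path_area (cons_a_step \<gamma>) = path_area (map (apfst Suc) \<gamma>)"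
    by (cases \<gamma>) (auto simp: cons_a_step_def)
  with path_area_apfst_Suc[OF walk] show ?thesis
    using \<open>\<gamma> \<noteq> []\<close> \<open>hd \<gamma> = (0, 0)\<close> \<open>snd (last \<gamma>) = k\<close> by simp
qed

lemma path_area_cons_b_step:
  "\<gamma> \<noteq> [] \<Longrightarrow> hd \<gamma> = (0, 0) \<Longrightarrow> path_area (cons_b_step \<gamma>) = path_area \<gamma>"
proof -
  assume "\<gamma> \<noteq> []" "hd \<gamma> = (0, 0)"
  then have "path_area (cons_b_step \<gamma>) = path_area (map (apsnd Suc) \<gamma>)"
    by (cases \<gamma>) (auto simp: cons_b_step_def)
  then show ?thesis by (simp add: path_area_apsnd_Suc)
qed

definition contraction :: "'i \<Rightarrow> ('i list \<Rightarrow> 'f) \<Rightarrow> 'i list \<Rightarrow> 'f" where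
  "contraction x w t = w (x # t)"

lemma T_op_Cons_Cons:
  fixes w :: "('a \<times> 'b) list \<Rightarrow> 'f::real_vector"
  shows "T_op (a # as) (b # bs) w =
      (if as = [] \<and> bs = [] then w [(a, b)] else 0)
    + (if as \<noteq> [] then ((-1::real) ^ length bs) *\<^sub>R T_op as (b # bs) (contraction (a, b) w) else 0)
    + (if bs \<noteq> [] then T_op (a # as) bs (contraction (a, b) w) else 0)"
proof -
  define F where
    "F \<gamma> = ((-1::real) ^ path_area \<gamma>) *\<^sub>R w (map (\<lambda>(p, q). ((a # as) ! p, (b # bs) ! q)) \<gamma>)"
    for \<gamma>
  define P1 where "P1 = (if as = [] \<and> bs = [] then {[(0::nat, 0::nat)]} else {})"
  define Pa where
    "Pa = (if as \<noteq> [] then cons_a_step ` lattice_paths (length as) (Suc (length bs)) else {})"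
  define Pb where
    "Pb = (if bs \<noteq> [] then cons_b_step ` lattice_paths (Suc (length as)) (length bs) else {})"
  have finite: "finite P1" "finite Pa" "finite Pb"
    by (simp_all add: P1_def Pa_def Pb_def finite_lattice_paths)
  have disjoint: "P1 \<inter> Pa = {}" "(P1 \<union> Pa) \<inter> Pb = {}"
    by (auto simp: P1_def Pa_def Pb_def cons_a_step_def cons_b_step_def
        lattice_paths_conv_successively
        dest: cons_a_step_neq_cons_b_step)
  have sum_a: "sum F (cons_a_step ` lattice_paths (length as) (Suc (length bs)))
      = ((-1::real) ^ length bs) *\<^sub>R T_op as (b # bs) (contraction (a, b) w)"
    unfolding T_op_def scaleR_sum_right length_Cons
  proof (rule sum.reindex_cong[OF inj_on_subset[OF inj_cons_a_step] refl])
    fix \<gamma> assume "\<gamma> \<in> lattice_paths (length as) (Suc (length bs))"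
    then show "F (cons_a_step \<gamma>) = ((-1::real) ^ length bs) *\<^sub>R (((-1::real) ^ path_area \<gamma>)
        *\<^sub>R contraction (a, b) w (map (\<lambda>(p, q). (as ! p, (b # bs) ! q)) \<gamma>))"
      unfolding F_def path_area_cons_a_step[OF \<open>\<gamma> \<in> _\<close>]
      by (simp add: cons_a_step_def contraction_def case_prod_unfold comp_def power_add)
  qed simp
  have sum_b: "sum F (cons_b_step ` lattice_paths (Suc (length as)) (length bs))
      = T_op (a # as) bs (contraction (a, b) w)"
    unfolding T_op_def length_Cons
  proof (rule sum.reindex_cong[OF inj_on_subset[OF inj_cons_b_step] refl])
    fix \<gamma> assume "\<gamma> \<in> lattice_paths (Suc (length as)) (length bs)"
    then have "path_area (cons_b_step \<gamma>) = path_area \<gamma>"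
      by (auto simp: lattice_paths_conv_successively path_area_cons_b_step)
    then show "F (cons_b_step \<gamma>) = ((-1::real) ^ path_area \<gamma>)
        *\<^sub>R contraction (a, b) w (map (\<lambda>(p, q). ((a # as) ! p, bs ! q)) \<gamma>)"
      unfolding F_def by (simp add: cons_b_step_def contraction_def case_prod_unfold comp_def)
  qed simp
  have sum_1: "F [(0, 0)] = w [(a, b)]"
    by (simp add: F_def)
  have "T_op (a # as) (b # bs) w = sum F (P1 \<union> Pa \<union> Pb)"
    unfolding T_op_def F_def P1_def Pa_def Pb_def length_Cons lattice_paths_Suc_Suc by simp
  also have "\<dots> = sum F P1 + sum F Pa + sum F Pb"
    using finite disjoint by (simp add: sum.union_disjoint)
  finally show ?thesis
    using sum_1 sum_a sum_b
    by (cases "as = []"; cases "bs = []") (simp_all add: P1_def Pa_def Pb_def)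
qed

text \<open>\<^const>\<open>T_op\<close> extended by zero to empty index lists, where \<^const>\<open>T_op\<close> takes junk values.
  Defining it by the first-step recursion provides the induction rule for the main identity.\<close>

fun T_rec :: "'a list \<Rightarrow> 'b list \<Rightarrow> (('a \<times> 'b) list \<Rightarrow> 'f::real_vector) \<Rightarrow> 'f" where
  "T_rec [] bs w = 0"
| "T_rec as [] w = 0"
| "T_rec (a # as) (b # bs) w =
     (if as = [] \<and> bs = [] then w [(a, b)] else 0)
   + ((-1::real) ^ length bs) *\<^sub>R T_rec as (b # bs) (contraction (a, b) w)
   + T_rec (a # as) bs (contraction (a, b) w)"

lemma T_rec_Nil2 [simp]: "T_rec as [] w = 0"
  by (cases as) simp_all

lemma T_op_eq_T_rec: "as \<noteq> [] \<Longrightarrow> bs \<noteq> [] \<Longrightarrow> T_op as bs w = T_rec as bs w"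
  by (induction as bs w rule: T_rec.induct) (auto simp: T_op_Cons_Cons)

lemma T_rec_diff: "T_rec as bs (\<lambda>t. u t - v t) = T_rec as bs u - T_rec as bs v"
proof (induction as bs u arbitrary: v rule: T_rec.induct)
  case (3 a as b bs u)
  have "contraction (a, b) (\<lambda>t. u t - v t) = (\<lambda>t. contraction (a, b) u t - contraction (a, b) v t)"
    by (simp add: contraction_def fun_eq_iff)
  with "3.IH"[of "contraction (a, b) v"]
  have ih_a: "T_rec as (b # bs) (contraction (a, b) (\<lambda>t. u t - v t))
          = T_rec as (b # bs) (contraction (a, b) u) - T_rec as (b # bs) (contraction (a, b) v)"
    and ih_b: "T_rec (a # as) bs (contraction (a, b) (\<lambda>t. u t - v t))
          = T_rec (a # as) bs (contraction (a, b) u) - T_rec (a # as) bs (contraction (a, b) v)"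
    by simp_all
  show ?case
    unfolding T_rec.simps ih_a ih_b by (simp add: scaleR_diff_right algebra_simps)
qed simp_all

definition delta_a_T_rec :: "'a list \<Rightarrow> 'b list \<Rightarrow> (('a \<times> 'b) list \<Rightarrow> 'f::real_vector) \<Rightarrow> 'f" where
  "delta_a_T_rec as bs w = (\<Sum>j<length as. ((-1::real) ^ j) *\<^sub>R T_rec (del_nth j as) bs w)"

definition delta_b_T_rec :: "'a list \<Rightarrow> 'b list \<Rightarrow> (('a \<times> 'b) list \<Rightarrow> 'f::real_vector) \<Rightarrow> 'f" where
  "delta_b_T_rec as bs w = (\<Sum>j<length bs. ((-1::real) ^ j) *\<^sub>R T_rec as (del_nth j bs) w)"

lemma del_nth_Cons_0 [simp]: "del_nth 0 (x # xs) = xs"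
  and del_nth_Cons_Suc [simp]: "del_nth (Suc j) (x # xs) = x # del_nth j xs"
  by (simp_all add: del_nth_def)

lemma length_del_nth: "j < length xs \<Longrightarrow> length (del_nth j xs) = length xs - 1"
  by (simp add: del_nth_def)

lemma del_nth_eq_Nil_iff: "j < length xs \<Longrightarrow> del_nth j xs = [] \<longleftrightarrow> length xs = 1"
  using length_del_nth[of j xs] by auto

lemma sum_alternating_del_nth_eq_Nil:
  "(\<Sum>j<length xs. ((-1::real) ^ j) *\<^sub>R (if del_nth j xs = [] \<and> P then c else 0))
     = (if length xs = 1 \<and> P then (c::'f::real_vector) else 0)"
  by (cases "length xs = 1") (simp_all add: del_nth_eq_Nil_iff)

lemma delta_a_T_rec_Cons:
  "delta_a_T_rec (a # as) bs w =
     T_rec as bs w - (\<Sum>j<length as. ((-1::real) ^ j) *\<^sub>R T_rec (a # del_nth j as) bs w)"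
  unfolding delta_a_T_rec_def length_Cons sum.lessThan_Suc_shift by (simp add: sum_negf)

lemma delta_b_T_rec_Cons:
  "delta_b_T_rec as (b # bs) w =
     T_rec as bs w - (\<Sum>j<length bs. ((-1::real) ^ j) *\<^sub>R T_rec as (b # del_nth j bs) w)"
  unfolding delta_b_T_rec_def length_Cons sum.lessThan_Suc_shift by (simp add: sum_negf)

lemma delta_a_T_rec_Cons_Cons:
  "delta_a_T_rec (a # as) (b # bs) w =
      T_rec as (b # bs) w
    - ((-1::real) ^ length bs) *\<^sub>R delta_a_T_rec as (b # bs) (contraction (a, b) w)
    - T_rec as bs (contraction (a, b) w) + delta_a_T_rec (a # as) bs (contraction (a, b) w)
    - (if length as = 1 \<and> bs = [] then w [(a, b)] else 0)"
proof -
  let ?w = "contraction (a, b) w"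
  have "(\<Sum>j<length as. ((-1::real) ^ j) *\<^sub>R T_rec (a # del_nth j as) (b # bs) w)
      = (\<Sum>j<length as. ((-1::real) ^ j) *\<^sub>R (if del_nth j as = [] \<and> bs = [] then w [(a, b)] else 0))
      + ((-1::real) ^ length bs) *\<^sub>R delta_a_T_rec as (b # bs) ?w
      + (\<Sum>j<length as. ((-1::real) ^ j) *\<^sub>R T_rec (a # del_nth j as) bs ?w)"
    by (simp add: delta_a_T_rec_def scaleR_add_right sum.distrib scaleR_sum_right algebra_simps)
  also have "\<dots> = (if length as = 1 \<and> bs = [] then w [(a, b)] else 0)
      + ((-1::real) ^ length bs) *\<^sub>R delta_a_T_rec as (b # bs) ?w
      + (T_rec as bs ?w - delta_a_T_rec (a # as) bs ?w)"
    unfolding sum_alternating_del_nth_eq_Nil delta_a_T_rec_Cons[of a as bs ?w] by simp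
  finally show ?thesis
    unfolding delta_a_T_rec_Cons[of a as "b # bs" w] by (simp add: algebra_simps)
qed

lemma delta_b_T_rec_Cons_Cons:
  "delta_b_T_rec (a # as) (b # bs) w =
      T_rec (a # as) bs w
    + ((-1::real) ^ length bs) *\<^sub>R
        (T_rec as bs (contraction (a, b) w) - delta_b_T_rec as (b # bs) (contraction (a, b) w))
    - delta_b_T_rec (a # as) bs (contraction (a, b) w)
    - (if as = [] \<and> length bs = 1 then w [(a, b)] else 0)"
proof -
  let ?w = "contraction (a, b) w"
  have signs: "(\<Sum>j<length bs. ((-1::real) ^ j) *\<^sub>R
          (((-1::real) ^ length (del_nth j bs)) *\<^sub>R T_rec as (b # del_nth j bs) ?w))
      = - ((-1::real) ^ length bs) *\<^sub>R (T_rec as bs ?w - delta_b_T_rec as (b # bs) ?w)"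
  proof (cases bs)
    case (Cons b' bs')
    have "(\<Sum>j<length bs. ((-1::real) ^ j) *\<^sub>R
          (((-1::real) ^ length (del_nth j bs)) *\<^sub>R T_rec as (b # del_nth j bs) ?w))
      = ((-1::real) ^ length bs') *\<^sub>R
          (\<Sum>j<length bs. ((-1::real) ^ j) *\<^sub>R T_rec as (b # del_nth j bs) ?w)"
      unfolding scaleR_sum_right by (intro sum.cong refl) (simp add: length_del_nth Cons)
    then show ?thesis
      unfolding delta_b_T_rec_Cons[of as b bs ?w] using Cons by simp
  qed (simp add: delta_b_T_rec_def)
  have "(\<Sum>j<length bs. ((-1::real) ^ j) *\<^sub>R T_rec (a # as) (b # del_nth j bs) w)
      = (\<Sum>j<length bs. ((-1::real) ^ j) *\<^sub>R (if del_nth j bs = [] \<and> as = [] then w [(a, b)] else 0))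
      + (\<Sum>j<length bs. ((-1::real) ^ j) *\<^sub>R
          (((-1::real) ^ length (del_nth j bs)) *\<^sub>R T_rec as (b # del_nth j bs) ?w))
      + delta_b_T_rec (a # as) bs ?w"
    by (simp add: delta_b_T_rec_def scaleR_add_right sum.distrib conj_commute)
  also have "\<dots> = (if length bs = 1 \<and> as = [] then w [(a, b)] else 0)
      - ((-1::real) ^ length bs) *\<^sub>R (T_rec as bs ?w - delta_b_T_rec as (b # bs) ?w)
      + delta_b_T_rec (a # as) bs ?w"
    unfolding sum_alternating_del_nth_eq_Nil signs by simp
  finally show ?thesis
    unfolding delta_b_T_rec_Cons[of "a # as" b bs w] by (simp add: algebra_simps conj_commute)
qed

lemma contraction_check_d:
  "contraction x (check_d d w) = (\<lambda>t. w t - check_d d (contraction x w) t)"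
proof
  fix t
  show "contraction x (check_d d w) t = w t - check_d d (contraction x w) t"
    unfolding contraction_def check_d_def length_Cons sum.lessThan_Suc_shift
    by (cases "t = []") (simp_all add: sum_negf algebra_simps)
qed

lemma T_rec_check_d:
  assumes "linear d"
  shows "T_rec as bs (check_d d w) =
      ((-1::real) ^ (length as + length bs + 1)) *\<^sub>R d (T_rec as bs w)
    + ((-1::real) ^ (length bs + 1)) *\<^sub>R delta_a_T_rec as bs w + delta_b_T_rec as bs w
    + (if length as = 1 \<and> length bs = 1 then w [] else 0)"
proof (induction as bs w rule: T_rec.induct)
  case (3 a as b bs w)
  let ?w = "contraction (a, b) w"
  show ?case
  proof (cases "as = [] \<and> bs = []")
    case True
    then show ?thesis by (simp add: check_d_def delta_a_T_rec_def delta_b_T_rec_def)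
  next
    case False
    have lhs: "T_rec (a # as) (b # bs) (check_d d w) =
        ((-1::real) ^ length bs) *\<^sub>R (T_rec as (b # bs) w - T_rec as (b # bs) (check_d d ?w))
      + (T_rec (a # as) bs w - T_rec (a # as) bs (check_d d ?w))"
      using False by (auto simp: contraction_check_d T_rec_diff)
    have d_T_rec: "d (T_rec (a # as) (b # bs) w) =
        ((-1::real) ^ length bs) *\<^sub>R d (T_rec as (b # bs) ?w) + d (T_rec (a # as) bs ?w)"
      using False by (auto simp: linear_add[OF assms] linear_scale[OF assms] linear_0[OF assms])
    show ?thesis
      unfolding lhs d_T_rec delta_a_T_rec_Cons_Cons delta_b_T_rec_Cons_Cons "3.IH"
      using False by (auto simp: algebra_simps contraction_def)
  qed
qed (simp_all add: linear_0[OF assms] delta_a_T_rec_def delta_b_T_rec_def)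

lemma delta_a_T_rec_eq:
  "as \<noteq> [] \<Longrightarrow> bs \<noteq> [] \<Longrightarrow>
     delta_a_T_rec as bs w = (if length as = 1 then 0 else delta_a_T as bs w)"
  unfolding delta_a_T_rec_def delta_a_T_def
  by (auto simp: T_op_eq_T_rec del_nth_eq_Nil_iff length_Suc_conv intro!: sum.cong)

lemma delta_b_T_rec_eq:
  "as \<noteq> [] \<Longrightarrow> bs \<noteq> [] \<Longrightarrow>
     delta_b_T_rec as bs w = (if length bs = 1 then 0 else delta_b_T as bs w)"
  unfolding delta_b_T_rec_def delta_b_T_def
  by (auto simp: T_op_eq_T_rec del_nth_eq_Nil_iff length_Suc_conv intro!: sum.cong)

theorem mainTheorem12:
  fixes n :: nat
    and d :: "'f::real_vector \<Rightarrow> 'f"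
    and w :: "('a \<times> 'b) list \<Rightarrow> 'f"
    and as :: "'a list" and bs :: "'b list"
  assumes "linear d"
    and "diff_cochain n d w"
    and "as \<noteq> []" and "bs \<noteq> []"
    and "length as \<ge> 2 \<or> length bs \<ge> 2"
  shows "T_op as bs (check_d d w) =
           ((-1::real) ^ (length as + length bs + 1)) *\<^sub>R d (T_op as bs w)
         + (if length as = 1 then 0 else ((-1::real) ^ (length bs + 1)) *\<^sub>R delta_a_T as bs w)
         + (if length bs = 1 then 0 else delta_b_T as bs w)"
  using T_rec_check_d[OF \<open>linear d\<close>, of as bs w] assms(3-5)
  by (auto simp: T_op_eq_T_rec delta_a_T_rec_eq delta_b_T_rec_eq)

end
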